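(* Consider a sequence of problems indexed by $n$, with $p=p_n$ and a distribution of $(X,Y)$ that may depend on $n$. For each $n$, let $(X_1,Y_1),\dots,(X_n,Y_n)$ be i.i.d. copies of $(X,Y)$ with $X\in\mathbb{R}^p$, $Y\in\mathbb{R}$, $E(Y^2)<\infty$, $E(\|X\|^2)<\infty$, $E(X)=0$, $\mathrm{Var}(X)=\mathbf{I}$. Let $\beta=E(XY)$, $\tau^2=\|\beta\|^2$, $\alpha=E(Y)$, $\sigma_Y^2=\mathrm{Var}(Y)$, $\sigma^2=\sigma_Y^2-\tau^2$, $\mu_4=E[(Y-\alpha)^4]$, $W_i=X_iY_i$, $W=XY$, $\mathbf{A}=E(WW^T)$. Let $\hat\tau^2=\binom{n}{2}^{-1}\sum_{i_1<i_2}W_{i_1}^TW_{i_2}$, $\hat\sigma_Y^2=\frac{1}{n-1}\sum_{i=1}^n(Y_i-\bar Y)^2$ and $\hat\sigma^2=\hat\sigma_Y^2-\hat\tau^2$. Assume $\mu_4$ and $\tau^2$ are bounded and $\|\mathbf{A}\|_F^2/n^2\to0$. Then $\hat\sigma^2-\sigma^2\to0$ in probability.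
   Context: $\|\cdot\|_F$ is the Frobenius norm. $\sigma^2$ is the variance of the residual $Y-\alpha-\beta^TX$ of the best linear predictor. *)

theory Defs
  imports "HOL-Probability.Probability"
begin

definition obsS :: "nat \<Rightarrow> ((nat \<Rightarrow> real) \<times> real) measure" where
  "obsS q = (PiM {..<q} (\<lambda>_. borel)) \<Otimes>\<^sub>M borel"

definition beta :: "((nat \<Rightarrow> real) \<times> real) measure \<Rightarrow> nat \<Rightarrow> real" where
  "beta P j = (LINT z|P. fst z j * snd z)"

definition tau2 :: "((nat \<Rightarrow> real) \<times> real) measure \<Rightarrow> nat \<Rightarrow> real" where
  "tau2 P q = (\<Sum>j<q. (beta P j)\<^sup>2)"

definition alpha :: "((nat \<Rightarrow> real) \<times> real) measure \<Rightarrow> real" where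
  "alpha P = (LINT z|P. snd z)"

definition sigmaY2 :: "((nat \<Rightarrow> real) \<times> real) measure \<Rightarrow> real" where
  "sigmaY2 P = (LINT z|P. (snd z - alpha P)\<^sup>2)"

definition sigma2 :: "((nat \<Rightarrow> real) \<times> real) measure \<Rightarrow> nat \<Rightarrow> real" where
  "sigma2 P q = sigmaY2 P - tau2 P q"

definition mu4 :: "((nat \<Rightarrow> real) \<times> real) measure \<Rightarrow> real" where
  "mu4 P = (LINT z|P. (snd z - alpha P) ^ 4)"

definition Amat :: "((nat \<Rightarrow> real) \<times> real) measure \<Rightarrow> nat \<Rightarrow> nat \<Rightarrow> real" where
  "Amat P j k = (LINT z|P. fst z j * fst z k * (snd z)\<^sup>2)"

definition frobA2 :: "((nat \<Rightarrow> real) \<times> real) measure \<Rightarrow> nat \<Rightarrow> real" where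
  "frobA2 P q = (\<Sum>j<q. \<Sum>k<q. (Amat P j k)\<^sup>2)"

definition tauhat2 :: "nat \<Rightarrow> nat \<Rightarrow> (nat \<Rightarrow> 'a \<Rightarrow> nat \<Rightarrow> real) \<Rightarrow> (nat \<Rightarrow> 'a \<Rightarrow> real) \<Rightarrow> 'a \<Rightarrow> real" where
  "tauhat2 n q X Y \<omega> =
     (\<Sum>i2<n. \<Sum>i1<i2. \<Sum>j<q. (X i1 \<omega> j * Y i1 \<omega>) * (X i2 \<omega> j * Y i2 \<omega>)) / real (n choose 2)"

definition Ybar :: "nat \<Rightarrow> (nat \<Rightarrow> 'a \<Rightarrow> real) \<Rightarrow> 'a \<Rightarrow> real" where
  "Ybar n Y \<omega> = (\<Sum>i<n. Y i \<omega>) / real n"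

definition sigmaYhat2 :: "nat \<Rightarrow> (nat \<Rightarrow> 'a \<Rightarrow> real) \<Rightarrow> 'a \<Rightarrow> real" where
  "sigmaYhat2 n Y \<omega> = (\<Sum>i<n. (Y i \<omega> - Ybar n Y \<omega>)\<^sup>2) / (real n - 1)"

definition sigmahat2 :: "nat \<Rightarrow> nat \<Rightarrow> (nat \<Rightarrow> 'a \<Rightarrow> nat \<Rightarrow> real) \<Rightarrow> (nat \<Rightarrow> 'a \<Rightarrow> real) \<Rightarrow> 'a \<Rightarrow> real" where
  "sigmahat2 n q X Y \<omega> = sigmaYhat2 n Y \<omega> - tauhat2 n q X Y \<omega>"

end

theory Submission
  imports Defs "HOL-Real_Asymp.Real_Asymp"
begin

(*
  Write V = W - beta and U = Y - alpha. The deviation of the estimator splits exactly into four terms,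
    sigmahat2 - sigma2 = sum_i (U_i^2 - sigmaY2) / (n - 1)
                         + (sigmaY2 / (n - 1) - (sum_i U_i)^2 / (n (n - 1)))
                         - (sum_(a<b) V_a . V_b) / C(n,2) - (2 / n) sum_i beta . V_i .
  The first, third and fourth are sums of uncorrelated centred terms with second moments at most
  n mu4, C(n,2) ||Cov W||_F^2 and n beta' (Cov W) beta; the second is dominated by a nonnegative
  variable of mean 2 sigmaY2 / (n - 1). Chebyshev and Markov bound the probability that any of them
  exceeds e/4, and ||Cov W||_F^2 <= 2 ||A||_F^2 + 2 tau^4, beta' (Cov W) beta <= tau^2 ||A||_F turn
  this into a bound that vanishes when mu4 and tau^2 stay bounded and ||A||_F / n tends to 0.
*)

type_synonym obs = "(nat \<Rightarrow> real) \<times> real"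

lemma measurable_obsS_coord [measurable]: "j < q \<Longrightarrow> (\<lambda>z. fst z j) \<in> borel_measurable (obsS q)"
  unfolding obsS_def by (rule measurable_compose[OF measurable_fst measurable_component_singleton]) auto

lemma measurable_obsS_snd [measurable]: "snd \<in> borel_measurable (obsS q)"
  unfolding obsS_def by (rule measurable_snd)

lemma integrable_mult_of_square_integrable:
  fixes f g :: "'b \<Rightarrow> real"
  assumes [measurable]: "f \<in> borel_measurable N" "g \<in> borel_measurable N"
    and "integrable N (\<lambda>x. (f x)\<^sup>2)" "integrable N (\<lambda>x. (g x)\<^sup>2)"
  shows "integrable N (\<lambda>x. f x * g x)"
proof (rule Bochner_Integration.integrable_bound)
  show "integrable N (\<lambda>x. (f x)\<^sup>2 + (g x)\<^sup>2)"
    using assms by simp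
  have "\<bar>f x\<bar> * \<bar>g x\<bar> \<le> (f x)\<^sup>2 + (g x)\<^sup>2" for x
  proof -
    have "0 \<le> \<bar>f x\<bar> * \<bar>g x\<bar>" "2 * (\<bar>f x\<bar> * \<bar>g x\<bar>) \<le> (f x)\<^sup>2 + (g x)\<^sup>2"
      using sum_squares_bound[of "\<bar>f x\<bar>" "\<bar>g x\<bar>"] by (simp_all add: mult.assoc)
    then show ?thesis by linarith
  qed
  then show "AE x in N. norm (f x * g x) \<le> norm ((f x)\<^sup>2 + (g x)\<^sup>2)"
    by (simp add: abs_mult)
qed measurable

lemma
  fixes f :: "'i \<Rightarrow> 'j \<Rightarrow> 'b \<Rightarrow> real"
  assumes "finite I" "finite J" "\<And>i j. i \<in> I \<Longrightarrow> j \<in> J \<Longrightarrow> integrable N (f i j)"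
  shows integrable_double_sum: "integrable N (\<lambda>x. \<Sum>i\<in>I. \<Sum>j\<in>J. f i j x)"
    and integral_double_sum: "(\<integral>x. (\<Sum>i\<in>I. \<Sum>j\<in>J. f i j x) \<partial>N) = (\<Sum>i\<in>I. \<Sum>j\<in>J. \<integral>x. f i j x \<partial>N)"
  using assms by (auto simp: Bochner_Integration.integral_sum)

lemma Bseq_mult_LIMSEQ_zero:
  fixes f g :: "nat \<Rightarrow> real"
  assumes "Bseq f" "g \<longlonglongrightarrow> 0"
  shows "(\<lambda>n. f n * g n) \<longlonglongrightarrow> 0"
  using bounded_bilinear.Bfun_prod_Zfun[OF bounded_bilinear_mult assms(1)] assms(2)
  by (simp add: tendsto_Zfun_iff)

lemma Bseq_of_nonneg_bounded:
  fixes f :: "nat \<Rightarrow> real"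
  assumes "\<And>n. 0 \<le> f n" and "\<exists>C. \<forall>n. f n \<le> C"
  shows "Bseq f"
proof -
  obtain C where "\<And>n. f n \<le> C"
    using assms(2) by blast
  then show ?thesis
    using assms(1) by (intro BseqI'[of _ C]) simp
qed

lemma borel_measurable_sum_list_fun:
  fixes fs :: "('a \<Rightarrow> real) list"
  shows "(\<And>f. f \<in> set fs \<Longrightarrow> f \<in> borel_measurable M) \<Longrightarrow> (\<lambda>x. \<Sum>f\<leftarrow>fs. f x) \<in> borel_measurable M"
  by (induction fs) auto

context finite_measure
begin

lemma measure_abs_sum_list_gt_le:
  fixes fs :: "('a \<Rightarrow> real) list"
  assumes "\<And>f. f \<in> set fs \<Longrightarrow> f \<in> borel_measurable M"
  shows "measure M {x\<in>space M. real (length fs) * c < \<bar>\<Sum>f\<leftarrow>fs. f x\<bar>}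
    \<le> (\<Sum>f\<leftarrow>fs. measure M {x\<in>space M. c \<le> \<bar>f x\<bar>})"
  using assms
proof (induction fs)
  case Nil
  then show ?case by simp
next
  case (Cons g fs)
  have [measurable]: "g \<in> borel_measurable M" "(\<lambda>x. \<Sum>f\<leftarrow>fs. f x) \<in> borel_measurable M"
    using Cons.prems by (auto intro: borel_measurable_sum_list_fun)
  let ?A = "{x\<in>space M. c \<le> \<bar>g x\<bar>}" and ?B = "{x\<in>space M. real (length fs) * c < \<bar>\<Sum>f\<leftarrow>fs. f x\<bar>}"
  have "measure M {x\<in>space M. real (length (g # fs)) * c < \<bar>\<Sum>f\<leftarrow>g # fs. f x\<bar>} \<le> measure M (?A \<union> ?B)"
    by (intro finite_measure_mono) (auto simp: algebra_simps)
  also have "\<dots> \<le> measure M ?A + measure M ?B"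
    by (intro measure_Un_le) measurable
  also have "\<dots> \<le> (\<Sum>f\<leftarrow>g # fs. measure M {x\<in>space M. c \<le> \<bar>f x\<bar>})"
    using Cons by simp
  finally show ?case .
qed

lemma measure_abs_ge_le_dominating:
  fixes f g :: "'a \<Rightarrow> real"
  assumes [measurable]: "f \<in> borel_measurable M" and "integrable M g"
    and "\<And>x. x \<in> space M \<Longrightarrow> \<bar>f x\<bar> \<le> g x" and "c > 0"
  shows "measure M {x\<in>space M. c \<le> \<bar>f x\<bar>} \<le> (\<integral>x. g x \<partial>M) / c"
proof -
  have [measurable]: "g \<in> borel_measurable M"
    using assms(2) by blast
  have "measure M {x\<in>space M. c \<le> \<bar>f x\<bar>} \<le> measure M {x\<in>space M. c \<le> g x}"
    using assms(3) by (intro finite_measure_mono) (auto intro: order_trans)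
  also have "\<dots> \<le> (\<integral>x. g x \<partial>M) / c"
    using assms(3) by (intro integral_Markov_inequality_measure assms(2,4))
      (auto intro!: AE_I2 intro: order_trans[OF abs_ge_zero])
  finally show ?thesis .
qed

lemma measure_abs_div_ge_le:
  fixes f :: "'a \<Rightarrow> real"
  assumes "f \<in> borel_measurable M" "integrable M (\<lambda>x. (f x)\<^sup>2)" "c > 0" "d \<noteq> 0"
  shows "measure M {x\<in>space M. c \<le> \<bar>f x / d\<bar>} \<le> (\<integral>x. (f x)\<^sup>2 \<partial>M) / (d\<^sup>2 * c\<^sup>2)"
proof -
  have "{x\<in>space M. c \<le> \<bar>f x / d\<bar>} = {x\<in>space M. c * \<bar>d\<bar> \<le> \<bar>f x\<bar>}"
    using assms(4) by (auto simp: pos_le_divide_eq abs_divide)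
  moreover have "measure M {x\<in>space M. c * \<bar>d\<bar> \<le> \<bar>f x\<bar>} \<le> (\<integral>x. (f x)\<^sup>2 \<partial>M) / (c * \<bar>d\<bar>)\<^sup>2"
    using assms by (intro second_moment_method) auto
  ultimately show ?thesis
    by (simp add: power_mult_distrib mult.commute)
qed

end

lemma sum_lessThan_real_eq_choose2: "(\<Sum>b<m. real b) = real (m choose 2)"
proof (induction m)
  case (Suc m)
  have "Suc m choose 2 = m + (m choose 2)"
    using binomial_Suc_Suc[of m 1] by (simp add: numeral_2_eq_2)
  then show ?case
    using Suc by simp
qed simp

lemma real_choose_two: "real (m choose 2) = real m * (real m - 1) / 2"
proof (induction m)
  case (Suc m)
  have "Suc m choose 2 = m + (m choose 2)"
    using binomial_Suc_Suc[of m 1] by (simp add: numeral_2_eq_2)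
  then show ?case
    using Suc by (simp add: field_simps)
qed simp

lemma sum_lower_pairs: "(\<Sum>b<m. \<Sum>a<b. f a) + (\<Sum>b<m. real b * f b) = (real m - 1) * (\<Sum>i<m. f i :: real)"
  by (induction m) (simp_all add: algebra_simps)

lemma sample_variance_decomp:
  fixes y :: "nat \<Rightarrow> real"
  assumes "m \<ge> 2"
  shows "(\<Sum>i<m. (y i - (\<Sum>i<m. y i) / real m)\<^sup>2) / (real m - 1) - s
    = (\<Sum>i<m. (y i - a)\<^sup>2 - s) / (real m - 1) + (s / (real m - 1) - (\<Sum>i<m. y i - a)\<^sup>2 / (real m * (real m - 1)))"
proof -
  define u where "u i = y i - a" for i
  have m: "real m > 1"
    using assms by simp
  define ubar where "ubar = (\<Sum>i<m. u i) / real m"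
  have "(\<Sum>i<m. (y i - (\<Sum>i<m. y i) / real m)\<^sup>2) = (\<Sum>i<m. (u i)\<^sup>2 - (2 * ubar) * u i + ubar\<^sup>2)"
  proof (intro sum.cong refl)
    fix i
    have "(\<Sum>i<m. y i) / real m = ubar + a"
      using m by (simp add: ubar_def u_def sum_subtractf field_simps)
    then show "(y i - (\<Sum>i<m. y i) / real m)\<^sup>2 = (u i)\<^sup>2 - (2 * ubar) * u i + ubar\<^sup>2"
      by (simp add: u_def power2_eq_square algebra_simps)
  qed
  also have "\<dots> = (\<Sum>i<m. (u i)\<^sup>2) - (2 * ubar) * (\<Sum>i<m. u i) + real m * ubar\<^sup>2"
    by (simp add: sum.distrib sum_subtractf sum_distrib_left)
  also have "\<dots> = (\<Sum>i<m. (u i)\<^sup>2) - (\<Sum>i<m. u i)\<^sup>2 / real m"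
    using m by (simp add: ubar_def field_simps power2_eq_square)
  finally have sum_sq: "(\<Sum>i<m. (y i - (\<Sum>i<m. y i) / real m)\<^sup>2) = (\<Sum>i<m. (u i)\<^sup>2) - (\<Sum>i<m. u i)\<^sup>2 / real m" .
  have sums: "(\<Sum>i<m. (y i - a)\<^sup>2 - s) = (\<Sum>i<m. (u i)\<^sup>2) - real m * s" "(\<Sum>i<m. y i - a) = (\<Sum>i<m. u i)"
    by (simp_all add: u_def sum_subtractf)
  have "(A - B\<^sup>2 / x) / (x - 1) - s = (A - x * s) / (x - 1) + (s / (x - 1) - B\<^sup>2 / (x * (x - 1)))"
    if "x > 1" for A B x :: real
  proof -
    have "(A - x * s) / (x - 1) + s / (x - 1) = (A - (x - 1) * s) / (x - 1)"
      by (simp add: add_divide_distrib[symmetric] algebra_simps)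
    also have "\<dots> = A / (x - 1) - s"
      using that by (simp add: diff_divide_distrib)
    finally show ?thesis
      by (simp add: diff_divide_distrib mult.commute)
  qed
  then show ?thesis
    unfolding sum_sq sums using m by blast
qed

section \<open>Second moments of sums over an i.i.d. sample\<close>

locale iid_sample = prob_space M + P: prob_space P
  for M :: "'a measure" and P :: "'b measure" +
  fixes S :: "'b measure" and n :: nat and Z :: "nat \<Rightarrow> 'a \<Rightarrow> 'b"
  assumes sets_P: "sets P = sets S"
    and measurable_Z: "\<And>i. i < n \<Longrightarrow> Z i \<in> measurable M S"
    and indep_Z: "indep_vars (\<lambda>_. S) Z {..<n}"
    and distr_Z: "\<And>i. i < n \<Longrightarrow> distr M S (Z i) = P"
begin

lemma measurable_P: "measurable P N = measurable S N"
  by (rule measurable_cong_sets[OF sets_P refl])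

lemma borel_measurable_comp_Z:
  "i < n \<Longrightarrow> f \<in> borel_measurable S \<Longrightarrow> (\<lambda>\<omega>. f (Z i \<omega>)) \<in> borel_measurable M"
  using measurable_compose[OF measurable_Z] by blast

lemma integrable_P_of_square:
  fixes h :: "'b \<Rightarrow> real"
  shows "h \<in> borel_measurable S \<Longrightarrow> integrable P (\<lambda>z. (h z)\<^sup>2) \<Longrightarrow> integrable P h"
  using P.square_integrable_imp_integrable by (simp add: measurable_P)

lemma
  fixes f :: "'b \<Rightarrow> real"
  assumes "i < n" "f \<in> borel_measurable S"
  shows integrable_comp_Z_iff: "integrable M (\<lambda>\<omega>. f (Z i \<omega>)) \<longleftrightarrow> integrable P f"
    and integral_comp_Z: "(\<integral>\<omega>. f (Z i \<omega>) \<partial>M) = (\<integral>z. f z \<partial>P)"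
  using integrable_distr_eq[OF measurable_Z assms(2)] integral_distr[OF measurable_Z assms(2)]
    distr_Z assms(1) by simp_all

lemma
  fixes f :: "'b \<Rightarrow> real" and g :: "(nat \<Rightarrow> 'b) \<Rightarrow> real"
  assumes i: "i < n" and J: "J \<subseteq> {..<n}" "i \<notin> J"
    and f: "f \<in> borel_measurable S" and g: "g \<in> borel_measurable (PiM J (\<lambda>_. S))"
    and f_int: "integrable P f" and g_int: "integrable M (\<lambda>\<omega>. g (\<lambda>k\<in>J. Z k \<omega>))"
  shows integrable_indep_mult: "integrable M (\<lambda>\<omega>. f (Z i \<omega>) * g (\<lambda>k\<in>J. Z k \<omega>))"
    and integral_indep_mult: "(\<integral>\<omega>. f (Z i \<omega>) * g (\<lambda>k\<in>J. Z k \<omega>) \<partial>M)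
      = (\<integral>z. f z \<partial>P) * (\<integral>\<omega>. g (\<lambda>k\<in>J. Z k \<omega>) \<partial>M)"
proof -
  have "indep_var (PiM {i} (\<lambda>_. S)) (\<lambda>\<omega>. \<lambda>k\<in>{i}. Z k \<omega>) (PiM J (\<lambda>_. S)) (\<lambda>\<omega>. \<lambda>k\<in>J. Z k \<omega>)"
    using i J by (intro indep_var_restrict[OF indep_Z]) auto
  moreover have "(\<lambda>x. f (x i)) \<in> borel_measurable (PiM {i} (\<lambda>_. S))"
    using measurable_compose[OF measurable_component_singleton[of i "{i}" "\<lambda>_. S"] f] by simp
  ultimately have "indep_var borel ((\<lambda>x. f (x i)) \<circ> (\<lambda>\<omega>. \<lambda>k\<in>{i}. Z k \<omega>)) borel (g \<circ> (\<lambda>\<omega>. \<lambda>k\<in>J. Z k \<omega>))"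
    by (rule indep_var_compose[OF _ _ g])
  then have indep: "indep_var borel (\<lambda>\<omega>. f (Z i \<omega>)) borel (\<lambda>\<omega>. g (\<lambda>k\<in>J. Z k \<omega>))"
    by (simp add: comp_def)
  have fZ_int: "integrable M (\<lambda>\<omega>. f (Z i \<omega>))"
    using integrable_comp_Z_iff[OF i f] f_int by simp
  show "integrable M (\<lambda>\<omega>. f (Z i \<omega>) * g (\<lambda>k\<in>J. Z k \<omega>))"
    by (rule indep_var_integrable[OF indep fZ_int g_int])
  show "(\<integral>\<omega>. f (Z i \<omega>) * g (\<lambda>k\<in>J. Z k \<omega>) \<partial>M) = (\<integral>z. f z \<partial>P) * (\<integral>\<omega>. g (\<lambda>k\<in>J. Z k \<omega>) \<partial>M)"
    unfolding indep_var_lebesgue_integral[OF indep fZ_int g_int] integral_comp_Z[OF i f] ..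
qed

lemma
  fixes h k :: "'b \<Rightarrow> real"
  assumes h: "h \<in> borel_measurable S" "integrable P (\<lambda>z. (h z)\<^sup>2)"
    and k: "k \<in> borel_measurable S" "integrable P (\<lambda>z. (k z)\<^sup>2)"
    and h_mean: "(\<integral>z. h z \<partial>P) = 0" and a: "a < n" and b: "b < n"
  shows integrable_centered_pair: "integrable M (\<lambda>\<omega>. h (Z a \<omega>) * k (Z b \<omega>))"
    and integral_centered_pair:
      "(\<integral>\<omega>. h (Z a \<omega>) * k (Z b \<omega>) \<partial>M) = (if a = b then \<integral>z. h z * k z \<partial>P else 0)"
proof -
  have hk: "(\<lambda>z. h z * k z) \<in> borel_measurable S"
    using h k by measurable
  have "integrable M (\<lambda>\<omega>. h (Z a \<omega>) * k (Z b \<omega>)) \<and>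
    (\<integral>\<omega>. h (Z a \<omega>) * k (Z b \<omega>) \<partial>M) = (if a = b then \<integral>z. h z * k z \<partial>P else 0)"
  proof (cases "a = b")
    case True
    have "integrable P (\<lambda>z. h z * k z)"
      using h k by (intro integrable_mult_of_square_integrable) (auto simp: measurable_P)
    then show ?thesis
      using True integrable_comp_Z_iff[OF a hk] integral_comp_Z[OF a hk] by simp
  next
    case False
    have J: "{b} \<subseteq> {..<n}" "a \<notin> {b}"
      using b False by auto
    have g: "(\<lambda>x. k (x b)) \<in> borel_measurable (PiM {b} (\<lambda>_. S))"
      using measurable_compose[OF measurable_component_singleton[of b "{b}" "\<lambda>_. S"] k(1)] by simp
    have g_int: "integrable M (\<lambda>\<omega>. (\<lambda>x. k (x b)) (\<lambda>i\<in>{b}. Z i \<omega>))"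
      using integrable_comp_Z_iff[OF b k(1)] integrable_P_of_square[OF k] by simp
    note hP = integrable_P_of_square[OF h]
    show ?thesis
      using integrable_indep_mult[OF a J h(1) g hP g_int] integral_indep_mult[OF a J h(1) g hP g_int]
        h_mean False by simp
  qed
  then show "integrable M (\<lambda>\<omega>. h (Z a \<omega>) * k (Z b \<omega>))"
    and "(\<integral>\<omega>. h (Z a \<omega>) * k (Z b \<omega>) \<partial>M) = (if a = b then \<integral>z. h z * k z \<partial>P else 0)"
    by auto
qed

lemma
  fixes h k :: "'b \<Rightarrow> real"
  assumes h: "h \<in> borel_measurable S" "integrable P (\<lambda>z. (h z)\<^sup>2)"
    and k: "k \<in> borel_measurable S" "integrable P (\<lambda>z. (k z)\<^sup>2)"
    and h_mean: "(\<integral>z. h z \<partial>P) = 0" and I: "I \<subseteq> {..<n}"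
  shows integrable_sum_centered_mult:
      "integrable M (\<lambda>\<omega>. (\<Sum>a\<in>I. h (Z a \<omega>)) * (\<Sum>a\<in>I. k (Z a \<omega>)))"
    and integral_sum_centered_mult:
      "(\<integral>\<omega>. (\<Sum>a\<in>I. h (Z a \<omega>)) * (\<Sum>a\<in>I. k (Z a \<omega>)) \<partial>M) = real (card I) * (\<integral>z. h z * k z \<partial>P)"
proof -
  have fin: "finite I"
    using I by (rule finite_subset) simp
  have prod: "(\<Sum>a\<in>I. h (Z a \<omega>)) * (\<Sum>a\<in>I. k (Z a \<omega>)) = (\<Sum>a\<in>I. \<Sum>b\<in>I. h (Z a \<omega>) * k (Z b \<omega>))" for \<omega>
    by (simp add: sum_product)
  have int: "integrable M (\<lambda>\<omega>. h (Z a \<omega>) * k (Z b \<omega>))" if "a \<in> I" "b \<in> I" for a b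
    using that I by (intro integrable_centered_pair[OF h k h_mean]) auto
  show "integrable M (\<lambda>\<omega>. (\<Sum>a\<in>I. h (Z a \<omega>)) * (\<Sum>a\<in>I. k (Z a \<omega>)))"
    unfolding prod by (rule integrable_double_sum[OF fin fin int])
  have "(\<integral>\<omega>. (\<Sum>a\<in>I. h (Z a \<omega>)) * (\<Sum>a\<in>I. k (Z a \<omega>)) \<partial>M)
      = (\<Sum>a\<in>I. \<Sum>b\<in>I. \<integral>\<omega>. h (Z a \<omega>) * k (Z b \<omega>) \<partial>M)"
    unfolding prod by (rule integral_double_sum[OF fin fin int])
  also have "\<dots> = (\<Sum>a\<in>I. \<Sum>b\<in>I. if a = b then \<integral>z. h z * k z \<partial>P else 0)"
    using I by (intro sum.cong refl integral_centered_pair[OF h k h_mean]) auto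
  finally show "(\<integral>\<omega>. (\<Sum>a\<in>I. h (Z a \<omega>)) * (\<Sum>a\<in>I. k (Z a \<omega>)) \<partial>M) = real (card I) * (\<integral>z. h z * k z \<partial>P)"
    using fin by simp
qed

lemma
  fixes h :: "'b \<Rightarrow> real"
  assumes h: "h \<in> borel_measurable S" "integrable P (\<lambda>z. (h z)\<^sup>2)" "(\<integral>z. h z \<partial>P) = 0"
  shows integrable_sum_centered_sq: "integrable M (\<lambda>\<omega>. (\<Sum>i<n. h (Z i \<omega>))\<^sup>2)"
    and integral_sum_centered_sq: "(\<integral>\<omega>. (\<Sum>i<n. h (Z i \<omega>))\<^sup>2 \<partial>M) = real n * (\<integral>z. (h z)\<^sup>2 \<partial>P)"
  using integrable_sum_centered_mult[OF h(1,2) h(1,2) h(3), of "{..<n}"]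
    integral_sum_centered_mult[OF h(1,2) h(1,2) h(3), of "{..<n}"]
  by (simp_all add: power2_eq_square)

lemma measure_sum_centered_ge_le:
  fixes h :: "'b \<Rightarrow> real"
  assumes h: "h \<in> borel_measurable S" "integrable P (\<lambda>z. (h z)\<^sup>2)" "(\<integral>z. h z \<partial>P) = 0"
    and "c > 0" "d \<noteq> 0"
  shows "measure M {\<omega>\<in>space M. c \<le> \<bar>(\<Sum>i<n. h (Z i \<omega>)) / d\<bar>} \<le> real n * (\<integral>z. (h z)\<^sup>2 \<partial>P) / (d\<^sup>2 * c\<^sup>2)"
proof -
  have "(\<lambda>\<omega>. \<Sum>i<n. h (Z i \<omega>)) \<in> borel_measurable M"
    using h(1) by (intro borel_measurable_sum borel_measurable_comp_Z) auto
  then show ?thesis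
    using measure_abs_div_ge_le[OF _ integrable_sum_centered_sq[OF h] assms(4,5)] integral_sum_centered_sq[OF h]
    by simp
qed

end

section \<open>Population moments of the regression model\<close>

definition wcomp :: "nat \<Rightarrow> obs \<Rightarrow> real" where
  "wcomp j z = fst z j * snd z"

definition wdev :: "obs measure \<Rightarrow> nat \<Rightarrow> obs \<Rightarrow> real" where
  "wdev Q j z = wcomp j z - beta Q j"

definition ydev :: "obs measure \<Rightarrow> obs \<Rightarrow> real" where
  "ydev Q z = snd z - alpha Q"

definition covW :: "obs measure \<Rightarrow> nat \<Rightarrow> nat \<Rightarrow> real" where
  "covW Q j k = Amat Q j k - beta Q j * beta Q k"

(* Kernels of the linear (Hajek) parts of tauhat2 and sigmaYhat2. *)
definition tau_proj :: "obs measure \<Rightarrow> nat \<Rightarrow> obs \<Rightarrow> real" where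
  "tau_proj Q q z = (\<Sum>j<q. beta Q j * wdev Q j z)"

definition var_proj :: "obs measure \<Rightarrow> obs \<Rightarrow> real" where
  "var_proj Q z = (ydev Q z)\<^sup>2 - sigmaY2 Q"

lemma borel_measurable_wcomp: "j < q \<Longrightarrow> wcomp j \<in> borel_measurable (obsS q)"
  unfolding wcomp_def[abs_def] by measurable

lemma borel_measurable_wdev: "j < q \<Longrightarrow> wdev Q j \<in> borel_measurable (obsS q)"
  unfolding wdev_def[abs_def] using borel_measurable_wcomp by measurable

lemma borel_measurable_ydev: "ydev Q \<in> borel_measurable (obsS q)"
  unfolding ydev_def[abs_def] by measurable

lemma borel_measurable_var_proj: "var_proj Q \<in> borel_measurable (obsS q)"
  unfolding var_proj_def[abs_def] using borel_measurable_ydev by measurable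

lemma borel_measurable_tau_proj: "tau_proj Q q \<in> borel_measurable (obsS q)"
  unfolding tau_proj_def[abs_def] using borel_measurable_wdev by measurable

lemma integral_wcomp: "(\<integral>z. wcomp j z \<partial>Q) = beta Q j"
  by (simp add: wcomp_def beta_def)

lemma sigmaY2_nonneg: "0 \<le> sigmaY2 Q"
  unfolding sigmaY2_def by (rule integral_nonneg_AE) auto

lemma mu4_nonneg: "0 \<le> mu4 Q"
  unfolding mu4_def by (rule integral_nonneg_AE) (auto simp: zero_le_even_power)

lemma tau2_nonneg: "0 \<le> tau2 Q q"
  unfolding tau2_def by (intro sum_nonneg) auto

lemma sum_covW_sq_le: "(\<Sum>j<q. \<Sum>k<q. (covW Q j k)\<^sup>2) \<le> 2 * frobA2 Q q + 2 * (tau2 Q q)\<^sup>2"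
proof -
  have "(\<Sum>j<q. \<Sum>k<q. (covW Q j k)\<^sup>2) \<le> (\<Sum>j<q. \<Sum>k<q. 2 * (Amat Q j k)\<^sup>2 + 2 * ((beta Q j)\<^sup>2 * (beta Q k)\<^sup>2))"
  proof (intro sum_mono)
    fix j k
    have "0 \<le> (Amat Q j k + beta Q j * beta Q k)\<^sup>2"
      by simp
    then show "(covW Q j k)\<^sup>2 \<le> 2 * (Amat Q j k)\<^sup>2 + 2 * ((beta Q j)\<^sup>2 * (beta Q k)\<^sup>2)"
      unfolding covW_def by (simp add: power2_eq_square algebra_simps)
  qed
  also have "\<dots> = 2 * frobA2 Q q + 2 * (tau2 Q q)\<^sup>2"
    by (simp add: frobA2_def tau2_def sum.distrib sum_distrib_left power2_eq_square sum_product mult_ac)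
  finally show ?thesis .
qed

lemma beta_covW_beta_le: "(\<Sum>j<q. \<Sum>k<q. beta Q j * beta Q k * covW Q j k) \<le> tau2 Q q * sqrt (frobA2 Q q)"
proof -
  define a where "a = (\<lambda>(j, k). beta Q j * beta Q k)"
  define b where "b = (\<lambda>(j, k). Amat Q j k)"
  have tau2_sq: "(\<Sum>j<q. \<Sum>k<q. (beta Q j)\<^sup>2 * (beta Q k)\<^sup>2) = (tau2 Q q)\<^sup>2"
    by (simp add: tau2_def power2_eq_square sum_product)
  have "(\<Sum>j<q. \<Sum>k<q. beta Q j * beta Q k * covW Q j k)
      = (\<Sum>j<q. \<Sum>k<q. beta Q j * beta Q k * Amat Q j k) - (\<Sum>j<q. \<Sum>k<q. (beta Q j)\<^sup>2 * (beta Q k)\<^sup>2)"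
    by (simp add: covW_def algebra_simps sum_subtractf power2_eq_square)
  also have "\<dots> = (\<Sum>x\<in>{..<q}\<times>{..<q}. a x * b x) - (tau2 Q q)\<^sup>2"
    unfolding tau2_sq by (simp add: a_def b_def sum.cartesian_product split_beta)
  finally have quad: "(\<Sum>j<q. \<Sum>k<q. beta Q j * beta Q k * covW Q j k)
      = (\<Sum>x\<in>{..<q}\<times>{..<q}. a x * b x) - (tau2 Q q)\<^sup>2" .
  have "(\<Sum>x\<in>{..<q}\<times>{..<q}. (a x)\<^sup>2) = (tau2 Q q)\<^sup>2"
    unfolding tau2_sq[symmetric] by (simp add: a_def sum.cartesian_product split_beta power_mult_distrib)
  moreover have "(\<Sum>x\<in>{..<q}\<times>{..<q}. (b x)\<^sup>2) = frobA2 Q q"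
    by (simp add: b_def frobA2_def sum.cartesian_product split_beta)
  ultimately have "(\<Sum>x\<in>{..<q}\<times>{..<q}. a x * b x)\<^sup>2 \<le> (tau2 Q q)\<^sup>2 * frobA2 Q q"
    using Cauchy_Schwarz_ineq_sum[of a b "{..<q}\<times>{..<q}"] by simp
  then have "(\<Sum>x\<in>{..<q}\<times>{..<q}. a x * b x) \<le> tau2 Q q * sqrt (frobA2 Q q)"
    using real_le_rsqrt tau2_nonneg by (fastforce simp: real_sqrt_mult)
  then show ?thesis
    unfolding quad by (smt (verit) zero_le_power2)
qed

locale regression_population = prob_space P for P :: "obs measure" +
  fixes q :: nat
  assumes sets_P_obs: "sets P = sets (obsS q)"
    and integrable_Y_sq: "integrable P (\<lambda>z. (snd z)\<^sup>2)"
    and integrable_A: "\<And>j k. j < q \<Longrightarrow> k < q \<Longrightarrow> integrable P (\<lambda>z. fst z j * fst z k * (snd z)\<^sup>2)"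
    and integrable_mu4: "integrable P (\<lambda>z. (snd z - alpha P) ^ 4)"
begin

lemma borel_measurable_P_obs: "f \<in> borel_measurable (obsS q) \<Longrightarrow> f \<in> borel_measurable P"
  by (simp only: measurable_cong_sets[OF sets_P_obs refl])

lemma integrable_of_square:
  fixes f :: "obs \<Rightarrow> real"
  assumes "f \<in> borel_measurable (obsS q)" "integrable P (\<lambda>z. (f z)\<^sup>2)"
  shows "integrable P f"
  using square_integrable_imp_integrable[OF borel_measurable_P_obs[OF assms(1)] assms(2)] .

lemma integrable_snd: "integrable P snd"
  by (rule integrable_of_square[OF measurable_obsS_snd integrable_Y_sq])

lemma integrable_ydev_sq: "integrable P (\<lambda>z. (ydev P z)\<^sup>2)"
  using integrable_snd integrable_Y_sq by (simp add: ydev_def power2_diff)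

lemma integral_ydev: "(\<integral>z. ydev P z \<partial>P) = 0"
  using integrable_snd by (simp add: ydev_def alpha_def prob_space)

lemma integral_ydev_sq: "(\<integral>z. (ydev P z)\<^sup>2 \<partial>P) = sigmaY2 P"
  by (simp add: ydev_def sigmaY2_def)

lemma integrable_ydev_pow4: "integrable P (\<lambda>z. (ydev P z) ^ 4)"
  using integrable_mu4 by (simp add: ydev_def)

lemma integral_ydev_pow4: "(\<integral>z. (ydev P z) ^ 4 \<partial>P) = mu4 P"
  by (simp add: ydev_def mu4_def)

lemma sigmaY2_le_mu4: "sigmaY2 P \<le> (1 + mu4 P) / 2"
proof -
  have "(\<integral>z. (ydev P z)\<^sup>2 \<partial>P) \<le> (\<integral>z. (1 + (ydev P z) ^ 4) / 2 \<partial>P)"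
  proof (rule integral_mono)
    show "integrable P (\<lambda>z. (1 + (ydev P z) ^ 4) / 2)"
      using integrable_ydev_pow4 by simp
    show "(ydev P z)\<^sup>2 \<le> (1 + (ydev P z) ^ 4) / 2" for z
      using sum_squares_bound[of 1 "(ydev P z)\<^sup>2"] by (simp add: power4_eq_xxxx power2_eq_square)
  qed (rule integrable_ydev_sq)
  then show ?thesis
    using integrable_ydev_pow4 by (simp add: integral_ydev_sq integral_ydev_pow4 prob_space)
qed

lemma var_proj_sq: "(var_proj P z)\<^sup>2 = (ydev P z) ^ 4 - 2 * sigmaY2 P * (ydev P z)\<^sup>2 + (sigmaY2 P)\<^sup>2"
  by (simp add: var_proj_def power2_eq_square power4_eq_xxxx algebra_simps)

lemma integrable_var_proj_sq: "integrable P (\<lambda>z. (var_proj P z)\<^sup>2)"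
  unfolding var_proj_sq using integrable_ydev_sq integrable_ydev_pow4 by simp

lemma integral_var_proj: "(\<integral>z. var_proj P z \<partial>P) = 0"
  using integrable_ydev_sq by (simp add: var_proj_def integral_ydev_sq prob_space)

lemma integral_var_proj_sq_le: "(\<integral>z. (var_proj P z)\<^sup>2 \<partial>P) \<le> mu4 P"
proof -
  have "(\<integral>z. (var_proj P z)\<^sup>2 \<partial>P) = mu4 P - 2 * sigmaY2 P * sigmaY2 P + (sigmaY2 P)\<^sup>2"
    unfolding var_proj_sq using integrable_ydev_sq integrable_ydev_pow4
    by (simp add: integral_ydev_sq integral_ydev_pow4 prob_space)
  also have "\<dots> = mu4 P - (sigmaY2 P)\<^sup>2"
    by (simp add: power2_eq_square algebra_simps)
  finally show ?thesis
    by simp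
qed

lemma integrable_wcomp_mult: "j < q \<Longrightarrow> k < q \<Longrightarrow> integrable P (\<lambda>z. wcomp j z * wcomp k z)"
  using integrable_A by (simp add: wcomp_def power2_eq_square mult_ac)

lemma integrable_wcomp: "j < q \<Longrightarrow> integrable P (wcomp j)"
  using integrable_of_square[OF borel_measurable_wcomp] integrable_wcomp_mult[of j j]
  by (simp add: power2_eq_square)

lemma
  assumes "j < q" "k < q"
  shows integrable_wdev_mult: "integrable P (\<lambda>z. wdev P j z * wdev P k z)"
    and integral_wdev_mult: "(\<integral>z. wdev P j z * wdev P k z \<partial>P) = covW P j k"
proof -
  have expand: "wdev P j z * wdev P k z
      = wcomp j z * wcomp k z - beta P k * wcomp j z - beta P j * wcomp k z + beta P j * beta P k" for z
    by (simp add: wdev_def algebra_simps)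
  have "(\<integral>z. wcomp j z * wcomp k z \<partial>P) = Amat P j k"
    unfolding Amat_def wcomp_def by (simp add: power2_eq_square mult_ac)
  then show "integrable P (\<lambda>z. wdev P j z * wdev P k z)"
    and "(\<integral>z. wdev P j z * wdev P k z \<partial>P) = covW P j k"
    unfolding expand using assms integrable_wcomp integrable_wcomp_mult
    by (simp_all add: covW_def prob_space integral_wcomp)
qed

lemma integral_wdev: "j < q \<Longrightarrow> (\<integral>z. wdev P j z \<partial>P) = 0"
  using integrable_wcomp by (simp add: wdev_def prob_space integral_wcomp)

lemma integrable_wdev_sq: "j < q \<Longrightarrow> integrable P (\<lambda>z. (wdev P j z)\<^sup>2)"
  using integrable_wdev_mult[of j j] by (simp add: power2_eq_square)

lemma integral_tau_proj: "(\<integral>z. tau_proj P q z \<partial>P) = 0"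
  using integrable_of_square[OF borel_measurable_wdev integrable_wdev_sq]
  by (simp add: tau_proj_def integral_wdev)

lemma
  shows integrable_tau_proj_sq: "integrable P (\<lambda>z. (tau_proj P q z)\<^sup>2)"
    and integral_tau_proj_sq:
      "(\<integral>z. (tau_proj P q z)\<^sup>2 \<partial>P) = (\<Sum>j<q. \<Sum>k<q. beta P j * beta P k * covW P j k)"
proof -
  have expand: "(tau_proj P q z)\<^sup>2 = (\<Sum>j<q. \<Sum>k<q. beta P j * beta P k * (wdev P j z * wdev P k z))" for z
    unfolding tau_proj_def power2_eq_square sum_product by (simp add: mult_ac)
  have int: "integrable P (\<lambda>z. beta P j * beta P k * (wdev P j z * wdev P k z))"
    if "j \<in> {..<q}" "k \<in> {..<q}" for j k
    using that integrable_wdev_mult by simp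
  show "integrable P (\<lambda>z. (tau_proj P q z)\<^sup>2)"
    unfolding expand by (rule integrable_double_sum[OF _ _ int]) auto
  have "(\<integral>z. (tau_proj P q z)\<^sup>2 \<partial>P)
      = (\<Sum>j<q. \<Sum>k<q. \<integral>z. beta P j * beta P k * (wdev P j z * wdev P k z) \<partial>P)"
    unfolding expand by (rule integral_double_sum[OF _ _ int]) auto
  then show "(\<integral>z. (tau_proj P q z)\<^sup>2 \<partial>P) = (\<Sum>j<q. \<Sum>k<q. beta P j * beta P k * covW P j k)"
    by (simp add: integral_wdev_mult)
qed

end

section \<open>Hoeffding decomposition of the estimator\<close>

(*
  tau_deg is the degenerate part sum_(a<b) V_a . V_b of the U-statistic tauhat2, grouped by the larger
  index b; the increments tau_deg_incr are martingale differences and hence orthogonal.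
*)
definition wdev_psum :: "obs measure \<Rightarrow> (nat \<Rightarrow> obs) \<Rightarrow> nat \<Rightarrow> nat \<Rightarrow> real" where
  "wdev_psum Q z b j = (\<Sum>a<b. wdev Q j (z a))"

definition tau_deg_incr :: "obs measure \<Rightarrow> nat \<Rightarrow> (nat \<Rightarrow> obs) \<Rightarrow> nat \<Rightarrow> real" where
  "tau_deg_incr Q q z b = (\<Sum>j<q. wdev Q j (z b) * wdev_psum Q z b j)"

definition tau_deg :: "obs measure \<Rightarrow> nat \<Rightarrow> (nat \<Rightarrow> obs) \<Rightarrow> nat \<Rightarrow> real" where
  "tau_deg Q q z m = (\<Sum>b<m. tau_deg_incr Q q z b)"

lemma wdev_psum_restrict: "b \<le> m \<Longrightarrow> wdev_psum Q (restrict z {..<m}) b j = wdev_psum Q z b j"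
  by (simp add: wdev_psum_def)

lemma tau_deg_incr_restrict: "b < m \<Longrightarrow> tau_deg_incr Q q (restrict z {..<m}) b = tau_deg_incr Q q z b"
  by (simp add: tau_deg_incr_def wdev_psum_restrict)

lemma borel_measurable_wdev_psum:
  assumes "b \<le> m" "j < q"
  shows "(\<lambda>x. wdev_psum Q x b j) \<in> borel_measurable (PiM {..<m} (\<lambda>_. obsS q))"
proof -
  have "(\<lambda>x. wdev Q j (x a)) \<in> borel_measurable (PiM {..<m} (\<lambda>_. obsS q))" if "a < b" for a
    using measurable_compose[OF measurable_component_singleton[of a "{..<m}" "\<lambda>_. obsS q"] borel_measurable_wdev[OF assms(2)]] that assms(1)
    by simp
  then show ?thesis
    unfolding wdev_psum_def by (intro borel_measurable_sum) auto
qed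

lemma borel_measurable_tau_deg_incr:
  assumes "b < m"
  shows "(\<lambda>x. tau_deg_incr Q q x b) \<in> borel_measurable (PiM {..<m} (\<lambda>_. obsS q))"
proof -
  have "(\<lambda>x. wdev Q j (x b)) \<in> borel_measurable (PiM {..<m} (\<lambda>_. obsS q))" if "j < q" for j
    using measurable_compose[OF measurable_component_singleton[of b "{..<m}" "\<lambda>_. obsS q"] borel_measurable_wdev[OF that]] assms
    by simp
  then show ?thesis
    unfolding tau_deg_incr_def using assms
    by (intro borel_measurable_sum borel_measurable_times borel_measurable_wdev_psum) auto
qed

lemma tauhat2_numerator_decomp:
  "(\<Sum>b<m. \<Sum>a<b. \<Sum>j<q. wcomp j (z a) * wcomp j (z b))
    = tau_deg Q q z m + (real m - 1) * (\<Sum>i<m. tau_proj Q q (z i)) + real (m choose 2) * tau2 Q q"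
proof -
  have wcomp_eq: "wcomp j x = wdev Q j x + beta Q j" for j x
    by (simp add: wdev_def)
  have pair: "(\<Sum>j<q. wcomp j (z a) * wcomp j (z b))
      = (\<Sum>j<q. wdev Q j (z b) * wdev Q j (z a)) + (tau_proj Q q (z a) + tau_proj Q q (z b)) + tau2 Q q" for a b
  proof -
    have "(\<Sum>j<q. wcomp j (z a) * wcomp j (z b)) = (\<Sum>j<q. wdev Q j (z b) * wdev Q j (z a)
        + (beta Q j * wdev Q j (z a) + beta Q j * wdev Q j (z b)) + (beta Q j)\<^sup>2)"
      by (intro sum.cong refl) (simp add: wcomp_eq algebra_simps power2_eq_square)
    then show ?thesis
      by (simp add: sum.distrib tau_proj_def tau2_def)
  qed
  have deg: "(\<Sum>b<m. \<Sum>a<b. \<Sum>j<q. wdev Q j (z b) * wdev Q j (z a)) = tau_deg Q q z m"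
    unfolding tau_deg_def tau_deg_incr_def wdev_psum_def sum_distrib_left
    by (intro sum.cong refl sum.swap)
  have "(\<Sum>b<m. real b * tau2 Q q) = real (m choose 2) * tau2 Q q"
    by (simp add: sum_distrib_right[symmetric] sum_lessThan_real_eq_choose2)
  then show ?thesis
    using sum_lower_pairs[where m=m and f="\<lambda>i. tau_proj Q q (z i)"] by (simp add: pair sum.distrib deg)
qed

lemma sigmahat2_deviation_decomp:
  fixes Z :: "nat \<Rightarrow> 'a \<Rightarrow> obs"
  assumes n: "n \<ge> 2"
  shows "sigmahat2 n q (\<lambda>i \<omega> j. fst (Z i \<omega>) j) (\<lambda>i \<omega>. snd (Z i \<omega>)) \<omega> - sigma2 Q q
    = (\<Sum>i<n. var_proj Q (Z i \<omega>)) / (real n - 1)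
      + (sigmaY2 Q / (real n - 1) - (\<Sum>i<n. ydev Q (Z i \<omega>))\<^sup>2 / (real n * (real n - 1)))
      - tau_deg Q q (\<lambda>i. Z i \<omega>) n / real (n choose 2) - 2 * (\<Sum>i<n. tau_proj Q q (Z i \<omega>)) / real n"
proof -
  have "sigmaYhat2 n (\<lambda>i \<omega>. snd (Z i \<omega>)) \<omega> - sigmaY2 Q
      = (\<Sum>i<n. var_proj Q (Z i \<omega>)) / (real n - 1)
        + (sigmaY2 Q / (real n - 1) - (\<Sum>i<n. ydev Q (Z i \<omega>))\<^sup>2 / (real n * (real n - 1)))"
    unfolding sigmaYhat2_def Ybar_def var_proj_def ydev_def by (rule sample_variance_decomp[OF n])
  moreover have "tauhat2 n q (\<lambda>i \<omega> j. fst (Z i \<omega>) j) (\<lambda>i \<omega>. snd (Z i \<omega>)) \<omega> - tau2 Q q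
      = tau_deg Q q (\<lambda>i. Z i \<omega>) n / real (n choose 2) + 2 * (\<Sum>i<n. tau_proj Q q (Z i \<omega>)) / real n"
  proof -
    have "tauhat2 n q (\<lambda>i \<omega> j. fst (Z i \<omega>) j) (\<lambda>i \<omega>. snd (Z i \<omega>)) \<omega>
        = (tau_deg Q q (\<lambda>i. Z i \<omega>) n + (real n - 1) * (\<Sum>i<n. tau_proj Q q (Z i \<omega>))
           + real (n choose 2) * tau2 Q q) / real (n choose 2)"
      using tauhat2_numerator_decomp[where m=n and q=q and z="\<lambda>i. Z i \<omega>" and Q=Q]
      by (simp add: tauhat2_def wcomp_def)
    also have "\<dots> = tau_deg Q q (\<lambda>i. Z i \<omega>) n / real (n choose 2)
        + (real n - 1) / real (n choose 2) * (\<Sum>i<n. tau_proj Q q (Z i \<omega>)) + tau2 Q q"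
      using n by (simp add: add_divide_distrib)
    also have "(real n - 1) / real (n choose 2) = 2 / real n"
      using n by (simp add: real_choose_two field_simps)
    finally show ?thesis
      by simp
  qed
  ultimately show ?thesis
    by (simp add: sigmahat2_def sigma2_def)
qed

locale regression_sample = iid_sample M P "obsS q" n Z + regression_population P q
  for M :: "'a measure" and P :: "obs measure" and q :: nat and n :: nat and Z :: "nat \<Rightarrow> 'a \<Rightarrow> obs"
begin

lemma borel_measurable_wdev_psum_Z:
  "b \<le> n \<Longrightarrow> j < q \<Longrightarrow> (\<lambda>\<omega>. wdev_psum P (\<lambda>i. Z i \<omega>) b j) \<in> borel_measurable M"
  unfolding wdev_psum_def by (intro borel_measurable_sum borel_measurable_comp_Z borel_measurable_wdev) auto

lemma borel_measurable_tau_deg_incr_Z: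
  "b < n \<Longrightarrow> (\<lambda>\<omega>. tau_deg_incr P q (\<lambda>i. Z i \<omega>) b) \<in> borel_measurable M"
  unfolding tau_deg_incr_def
  by (intro borel_measurable_sum borel_measurable_times borel_measurable_comp_Z borel_measurable_wdev
      borel_measurable_wdev_psum_Z) auto

lemma
  assumes "b \<le> n" "j < q" "k < q"
  shows integrable_wdev_psum_mult:
      "integrable M (\<lambda>\<omega>. wdev_psum P (\<lambda>i. Z i \<omega>) b j * wdev_psum P (\<lambda>i. Z i \<omega>) b k)"
    and integral_wdev_psum_mult:
      "(\<integral>\<omega>. wdev_psum P (\<lambda>i. Z i \<omega>) b j * wdev_psum P (\<lambda>i. Z i \<omega>) b k \<partial>M) = real b * covW P j k"
  using assms
    integrable_sum_centered_mult[OF borel_measurable_wdev integrable_wdev_sq borel_measurable_wdev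
      integrable_wdev_sq integral_wdev, of j k "{..<b}"]
    integral_sum_centered_mult[OF borel_measurable_wdev integrable_wdev_sq borel_measurable_wdev
      integrable_wdev_sq integral_wdev, of j k "{..<b}"]
  by (simp_all add: wdev_psum_def integral_wdev_mult)

lemma
  assumes b: "b < n"
  shows integrable_tau_deg_incr_sq: "integrable M (\<lambda>\<omega>. (tau_deg_incr P q (\<lambda>i. Z i \<omega>) b)\<^sup>2)"
    and integral_tau_deg_incr_sq:
      "(\<integral>\<omega>. (tau_deg_incr P q (\<lambda>i. Z i \<omega>) b)\<^sup>2 \<partial>M) = real b * (\<Sum>j<q. \<Sum>k<q. (covW P j k)\<^sup>2)"
proof -
  let ?R = "\<lambda>j \<omega>. wdev_psum P (\<lambda>i. Z i \<omega>) b j"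
  let ?f = "\<lambda>j k \<omega>. wdev P j (Z b \<omega>) * wdev P k (Z b \<omega>) * (?R j \<omega> * ?R k \<omega>)"
  have expand: "(tau_deg_incr P q (\<lambda>i. Z i \<omega>) b)\<^sup>2 = (\<Sum>j<q. \<Sum>k<q. ?f j k \<omega>)" for \<omega>
    unfolding tau_deg_incr_def power2_eq_square sum_product by (simp add: mult_ac)
  have summand: "integrable M (?f j k) \<and> (\<integral>\<omega>. ?f j k \<omega> \<partial>M) = real b * (covW P j k)\<^sup>2"
    if jk: "j \<in> {..<q}" "k \<in> {..<q}" for j k
  proof -
    let ?g = "\<lambda>x. wdev_psum P x b j * wdev_psum P x b k"
    have f: "(\<lambda>z. wdev P j z * wdev P k z) \<in> borel_measurable (obsS q)"
      using borel_measurable_wdev jk by simp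
    have g: "?g \<in> borel_measurable (PiM {..<b} (\<lambda>_. obsS q))"
      using jk by (intro borel_measurable_times borel_measurable_wdev_psum) auto
    have g_eq: "?g (\<lambda>i\<in>{..<b}. Z i \<omega>) = ?R j \<omega> * ?R k \<omega>" for \<omega>
      by (simp add: wdev_psum_restrict)
    have g_int: "integrable M (\<lambda>\<omega>. ?g (\<lambda>i\<in>{..<b}. Z i \<omega>))"
      unfolding g_eq using integrable_wdev_psum_mult b jk by simp
    have J: "{..<b} \<subseteq> {..<n}" "b \<notin> {..<b}"
      using b by auto
    have f_int: "integrable P (\<lambda>z. wdev P j z * wdev P k z)"
      using integrable_wdev_mult jk by simp
    show ?thesis
      using integrable_indep_mult[OF b J f g f_int g_int] integral_indep_mult[OF b J f g f_int g_int]
        integral_wdev_mult integral_wdev_psum_mult b jk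
      unfolding g_eq by (simp add: power2_eq_square mult_ac)
  qed
  show "integrable M (\<lambda>\<omega>. (tau_deg_incr P q (\<lambda>i. Z i \<omega>) b)\<^sup>2)"
    unfolding expand using summand by (intro integrable_double_sum) auto
  have "(\<integral>\<omega>. (tau_deg_incr P q (\<lambda>i. Z i \<omega>) b)\<^sup>2 \<partial>M) = (\<Sum>j<q. \<Sum>k<q. \<integral>\<omega>. ?f j k \<omega> \<partial>M)"
    unfolding expand using summand by (intro integral_double_sum) auto
  then show "(\<integral>\<omega>. (tau_deg_incr P q (\<lambda>i. Z i \<omega>) b)\<^sup>2 \<partial>M) = real b * (\<Sum>j<q. \<Sum>k<q. (covW P j k)\<^sup>2)"
    using summand by (simp add: sum_distrib_left)
qed

lemma
  assumes bb': "b < b'" and b': "b' < n"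
  shows integrable_tau_deg_incr_cross:
      "integrable M (\<lambda>\<omega>. tau_deg_incr P q (\<lambda>i. Z i \<omega>) b * tau_deg_incr P q (\<lambda>i. Z i \<omega>) b')"
    and integral_tau_deg_incr_cross:
      "(\<integral>\<omega>. tau_deg_incr P q (\<lambda>i. Z i \<omega>) b * tau_deg_incr P q (\<lambda>i. Z i \<omega>) b' \<partial>M) = 0"
proof -
  let ?T = "\<lambda>\<omega>. tau_deg_incr P q (\<lambda>i. Z i \<omega>) b"
  let ?R = "\<lambda>j \<omega>. wdev_psum P (\<lambda>i. Z i \<omega>) b' j"
  let ?f = "\<lambda>j \<omega>. wdev P j (Z b' \<omega>) * (?R j \<omega> * ?T \<omega>)"
  have expand: "?T \<omega> * tau_deg_incr P q (\<lambda>i. Z i \<omega>) b' = (\<Sum>j<q. ?f j \<omega>)" for \<omega>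
    unfolding tau_deg_incr_def[of P q _ b'] sum_distrib_left by (simp add: mult_ac)
  have summand: "integrable M (?f j) \<and> (\<integral>\<omega>. ?f j \<omega> \<partial>M) = 0" if j: "j < q" for j
  proof -
    let ?g = "\<lambda>x. wdev_psum P x b' j * tau_deg_incr P q x b"
    have g: "?g \<in> borel_measurable (PiM {..<b'} (\<lambda>_. obsS q))"
      using j bb' by (intro borel_measurable_times borel_measurable_wdev_psum borel_measurable_tau_deg_incr) auto
    have g_eq: "?g (\<lambda>i\<in>{..<b'}. Z i \<omega>) = ?R j \<omega> * ?T \<omega>" for \<omega>
      using bb' by (simp add: wdev_psum_restrict tau_deg_incr_restrict)
    have "integrable M (\<lambda>\<omega>. ?R j \<omega> * ?T \<omega>)"
      using j bb' b' integrable_wdev_psum_mult[of b' j j] integrable_tau_deg_incr_sq[of b]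
      by (intro integrable_mult_of_square_integrable borel_measurable_wdev_psum_Z borel_measurable_tau_deg_incr_Z)
        (simp_all add: power2_eq_square)
    then have g_int: "integrable M (\<lambda>\<omega>. ?g (\<lambda>i\<in>{..<b'}. Z i \<omega>))"
      unfolding g_eq .
    have J: "{..<b'} \<subseteq> {..<n}" "b' \<notin> {..<b'}"
      using b' by auto
    have f_int: "integrable P (wdev P j)"
      by (rule integrable_of_square[OF borel_measurable_wdev[OF j] integrable_wdev_sq[OF j]])
    show ?thesis
      using integrable_indep_mult[OF b' J borel_measurable_wdev[OF j] g f_int g_int]
        integral_indep_mult[OF b' J borel_measurable_wdev[OF j] g f_int g_int] integral_wdev[OF j]
      unfolding g_eq by simp
  qed
  show "integrable M (\<lambda>\<omega>. ?T \<omega> * tau_deg_incr P q (\<lambda>i. Z i \<omega>) b')"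
    unfolding expand using summand by (intro Bochner_Integration.integrable_sum) auto
  show "(\<integral>\<omega>. ?T \<omega> * tau_deg_incr P q (\<lambda>i. Z i \<omega>) b' \<partial>M) = 0"
    unfolding expand using summand by (subst Bochner_Integration.integral_sum) auto
qed

lemma
  shows integrable_tau_deg_sq: "integrable M (\<lambda>\<omega>. (tau_deg P q (\<lambda>i. Z i \<omega>) n)\<^sup>2)"
    and integral_tau_deg_sq:
      "(\<integral>\<omega>. (tau_deg P q (\<lambda>i. Z i \<omega>) n)\<^sup>2 \<partial>M) = real (n choose 2) * (\<Sum>j<q. \<Sum>k<q. (covW P j k)\<^sup>2)"
proof -
  let ?T = "\<lambda>b \<omega>. tau_deg_incr P q (\<lambda>i. Z i \<omega>) b"
  have expand: "(tau_deg P q (\<lambda>i. Z i \<omega>) n)\<^sup>2 = (\<Sum>b<n. \<Sum>b'<n. ?T b \<omega> * ?T b' \<omega>)" for \<omega>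
    unfolding tau_deg_def power2_eq_square sum_product ..
  have summand: "integrable M (\<lambda>\<omega>. ?T b \<omega> * ?T b' \<omega>) \<and>
      (\<integral>\<omega>. ?T b \<omega> * ?T b' \<omega> \<partial>M) = (if b = b' then real b * (\<Sum>j<q. \<Sum>k<q. (covW P j k)\<^sup>2) else 0)"
    if "b \<in> {..<n}" "b' \<in> {..<n}" for b b'
  proof -
    consider "b = b'" | "b < b'" | "b' < b"
      by linarith
    then show ?thesis
    proof cases
      case 1
      then show ?thesis
        using that integrable_tau_deg_incr_sq integral_tau_deg_incr_sq by (simp add: power2_eq_square)
    next
      case 2
      then show ?thesis
        using that integrable_tau_deg_incr_cross integral_tau_deg_incr_cross by simp
    next
      case 3
      then show ?thesis
        using that integrable_tau_deg_incr_cross[of b' b] integral_tau_deg_incr_cross[of b' b]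
        by (simp add: mult.commute)
    qed
  qed
  show "integrable M (\<lambda>\<omega>. (tau_deg P q (\<lambda>i. Z i \<omega>) n)\<^sup>2)"
    unfolding expand using summand by (intro integrable_double_sum) auto
  have "(\<integral>\<omega>. (tau_deg P q (\<lambda>i. Z i \<omega>) n)\<^sup>2 \<partial>M) = (\<Sum>b<n. \<Sum>b'<n. \<integral>\<omega>. ?T b \<omega> * ?T b' \<omega> \<partial>M)"
    unfolding expand using summand by (intro integral_double_sum) auto
  also have "\<dots> = (\<Sum>b<n. \<Sum>b'<n. if b = b' then real b * (\<Sum>j<q. \<Sum>k<q. (covW P j k)\<^sup>2) else 0)"
    using summand by (intro sum.cong refl) auto
  finally have "(\<integral>\<omega>. (tau_deg P q (\<lambda>i. Z i \<omega>) n)\<^sup>2 \<partial>M)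
      = (\<Sum>b<n. \<Sum>b'<n. if b = b' then real b * (\<Sum>j<q. \<Sum>k<q. (covW P j k)\<^sup>2) else 0)" .
  then show "(\<integral>\<omega>. (tau_deg P q (\<lambda>i. Z i \<omega>) n)\<^sup>2 \<partial>M) = real (n choose 2) * (\<Sum>j<q. \<Sum>k<q. (covW P j k)\<^sup>2)"
    by (simp add: sum_distrib_right[symmetric] sum_lessThan_real_eq_choose2)
qed

end

section \<open>Chebyshev bound and consistency\<close>

(* The arguments m, t and f stand for mu4, tau2 and ||A||_F^2 / n^2. *)
definition deviation_bound :: "real \<Rightarrow> nat \<Rightarrow> real \<Rightarrow> real \<Rightarrow> real \<Rightarrow> real" where
  "deviation_bound e n m t f =
    (16 * (m * (real n / (real n - 1)\<^sup>2)) + 64 * (f * (real n / (real n - 1)))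
      + 64 * (t\<^sup>2 * (1 / (real n * (real n - 1)))) + 64 * (t * sqrt f)) / e\<^sup>2
    + 4 * ((1 + m) * (1 / (real n - 1))) / e"

lemma deviation_bound_LIMSEQ_zero:
  fixes m t f :: "nat \<Rightarrow> real"
  assumes m: "Bseq m" and t: "Bseq t" and f: "f \<longlonglongrightarrow> 0"
  shows "(\<lambda>n. deviation_bound e n (m n) (t n) (f n)) \<longlonglongrightarrow> 0"
proof -
  have "(\<lambda>n. m n * (real n / (real n - 1)\<^sup>2)) \<longlonglongrightarrow> 0"
    using m by (rule Bseq_mult_LIMSEQ_zero) real_asymp
  moreover have "(\<lambda>n. real n / (real n - 1)) \<longlonglongrightarrow> 1"
    by real_asymp
  then have "(\<lambda>n. f n * (real n / (real n - 1))) \<longlonglongrightarrow> 0"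
    using tendsto_mult[OF f] by fastforce
  moreover have "(\<lambda>n. (t n)\<^sup>2 * (1 / (real n * (real n - 1)))) \<longlonglongrightarrow> 0"
    using Bseq_mult[OF t t] by (intro Bseq_mult_LIMSEQ_zero) (simp_all add: power2_eq_square, real_asymp)
  moreover have "(\<lambda>n. t n * sqrt (f n)) \<longlonglongrightarrow> 0"
    using t tendsto_real_sqrt[OF f] by (intro Bseq_mult_LIMSEQ_zero) simp_all
  moreover have "(\<lambda>n. (1 + m n) * (1 / (real n - 1))) \<longlonglongrightarrow> 0"
    using Bseq_add[OF m, of 1] by (intro Bseq_mult_LIMSEQ_zero) (simp_all add: add.commute, real_asymp)
  ultimately show ?thesis
    unfolding deviation_bound_def by (intro tendsto_add_zero tendsto_divide_zero tendsto_mult_right_zero)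
qed

context regression_sample
begin

lemma measure_variance_correction_ge_le:
  assumes n: "n \<ge> 2" and c: "c > 0"
  shows "measure M {\<omega>\<in>space M.
      c \<le> \<bar>sigmaY2 P / (real n - 1) - (\<Sum>i<n. ydev P (Z i \<omega>))\<^sup>2 / (real n * (real n - 1))\<bar>}
    \<le> 2 * sigmaY2 P / ((real n - 1) * c)"
proof -
  define SU where "SU \<omega> = (\<Sum>i<n. ydev P (Z i \<omega>))" for \<omega>
  let ?g = "\<lambda>\<omega>. sigmaY2 P / (real n - 1) + (SU \<omega>)\<^sup>2 / (real n * (real n - 1))"
  have n1: "real n - 1 > 0"
    using n by simp
  have [measurable]: "SU \<in> borel_measurable M"
    unfolding SU_def[abs_def] by (intro borel_measurable_sum borel_measurable_comp_Z borel_measurable_ydev) simp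
  note SU_sq = integrable_sum_centered_sq[OF borel_measurable_ydev integrable_ydev_sq integral_ydev]
    integral_sum_centered_sq[OF borel_measurable_ydev integrable_ydev_sq integral_ydev]
  have "\<bar>sigmaY2 P / (real n - 1) - (SU \<omega>)\<^sup>2 / (real n * (real n - 1))\<bar> \<le> ?g \<omega>" for \<omega>
    using sigmaY2_nonneg n1 by (intro abs_diff_le_iff[THEN iffD2]) (auto simp: abs_le_iff)
  moreover have "integrable M ?g"
    using SU_sq by (simp add: SU_def)
  ultimately have "measure M {\<omega>\<in>space M. c \<le> \<bar>sigmaY2 P / (real n - 1) - (SU \<omega>)\<^sup>2 / (real n * (real n - 1))\<bar>}
      \<le> (\<integral>\<omega>. ?g \<omega> \<partial>M) / c"
    using c by (intro measure_abs_ge_le_dominating) auto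
  also have "(\<integral>\<omega>. ?g \<omega> \<partial>M) = 2 * sigmaY2 P / (real n - 1)"
    using SU_sq n1 n by (simp add: SU_def integral_ydev_sq prob_space)
  finally show ?thesis
    by (simp add: SU_def)
qed

lemma measure_var_proj_sum_ge_le:
  assumes n: "n \<ge> 2" and c: "c > 0"
  shows "measure M {\<omega>\<in>space M. c \<le> \<bar>(\<Sum>i<n. var_proj P (Z i \<omega>)) / (real n - 1)\<bar>}
    \<le> real n * mu4 P / ((real n - 1)\<^sup>2 * c\<^sup>2)"
proof -
  have "measure M {\<omega>\<in>space M. c \<le> \<bar>(\<Sum>i<n. var_proj P (Z i \<omega>)) / (real n - 1)\<bar>}
      \<le> real n * (\<integral>z. (var_proj P z)\<^sup>2 \<partial>P) / ((real n - 1)\<^sup>2 * c\<^sup>2)"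
    using n by (intro measure_sum_centered_ge_le borel_measurable_var_proj integrable_var_proj_sq
        integral_var_proj c) simp
  also have "\<dots> \<le> real n * mu4 P / ((real n - 1)\<^sup>2 * c\<^sup>2)"
    using integral_var_proj_sq_le by (intro divide_right_mono mult_left_mono) auto
  finally show ?thesis .
qed

lemma measure_tau_proj_sum_ge_le:
  assumes n: "n \<ge> 2" and c: "c > 0"
  shows "measure M {\<omega>\<in>space M. c \<le> \<bar>- ((\<Sum>i<n. tau_proj P q (Z i \<omega>)) / (real n / 2))\<bar>}
    \<le> 4 * ((\<Sum>j<q. \<Sum>k<q. beta P j * beta P k * covW P j k) / real n) / c\<^sup>2"
proof -
  have "measure M {\<omega>\<in>space M. c \<le> \<bar>- ((\<Sum>i<n. tau_proj P q (Z i \<omega>)) / (real n / 2))\<bar>}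
      \<le> real n * (\<integral>z. (tau_proj P q z)\<^sup>2 \<partial>P) / ((real n / 2)\<^sup>2 * c\<^sup>2)"
    unfolding abs_minus_cancel using n
    by (intro measure_sum_centered_ge_le borel_measurable_tau_proj integrable_tau_proj_sq integral_tau_proj c) simp
  also have "\<dots> = 4 * ((\<Sum>j<q. \<Sum>k<q. beta P j * beta P k * covW P j k) / real n) / c\<^sup>2"
    using n c unfolding integral_tau_proj_sq by (simp add: power_divide field_simps power2_eq_square)
  finally show ?thesis .
qed

lemma measure_tau_deg_ge_le:
  assumes n: "n \<ge> 2" and c: "c > 0"
  shows "measure M {\<omega>\<in>space M. c \<le> \<bar>- (tau_deg P q (\<lambda>i. Z i \<omega>) n / real (n choose 2))\<bar>}
    \<le> (\<Sum>j<q. \<Sum>k<q. (covW P j k)\<^sup>2) / real (n choose 2) / c\<^sup>2"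
proof -
  have [measurable]: "(\<lambda>\<omega>. tau_deg P q (\<lambda>i. Z i \<omega>) n) \<in> borel_measurable M"
    unfolding tau_deg_def by (intro borel_measurable_sum borel_measurable_tau_deg_incr_Z) simp
  have "real (n choose 2) > 0"
    using n by (simp add: real_choose_two)
  then show ?thesis
    using measure_abs_div_ge_le[of "\<lambda>\<omega>. tau_deg P q (\<lambda>i. Z i \<omega>) n" c "real (n choose 2)"]
      integrable_tau_deg_sq integral_tau_deg_sq c
    by (simp add: power2_eq_square)
qed

lemma sigmahat2_deviation_prob_le_moments:
  assumes n: "n \<ge> 2" and e: "e > 0"
  shows "measure M {\<omega>\<in>space M. e < \<bar>sigmahat2 n q (\<lambda>i \<omega> j. fst (Z i \<omega>) j) (\<lambda>i \<omega>. snd (Z i \<omega>)) \<omega> - sigma2 P q\<bar>}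
    \<le> (16 * (real n * mu4 P / (real n - 1)\<^sup>2) + 16 * ((\<Sum>j<q. \<Sum>k<q. (covW P j k)\<^sup>2) / real (n choose 2))
        + 64 * ((\<Sum>j<q. \<Sum>k<q. beta P j * beta P k * covW P j k) / real n)) / e\<^sup>2
      + 8 * (sigmaY2 P / (real n - 1)) / e"
proof -
  define c where "c = e / 4"
  have c: "c > 0"
    using e by (simp add: c_def)
  define S1 where "S1 \<omega> = (\<Sum>i<n. var_proj P (Z i \<omega>))" for \<omega>
  define SU where "SU \<omega> = (\<Sum>i<n. ydev P (Z i \<omega>))" for \<omega>
  define S5 where "S5 \<omega> = (\<Sum>i<n. tau_proj P q (Z i \<omega>))" for \<omega>
  define D where "D \<omega> = tau_deg P q (\<lambda>i. Z i \<omega>) n" for \<omega>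
  have [measurable]: "S1 \<in> borel_measurable M" "SU \<in> borel_measurable M" "S5 \<in> borel_measurable M"
    "D \<in> borel_measurable M"
    unfolding S1_def[abs_def] SU_def[abs_def] S5_def[abs_def] D_def[abs_def] tau_deg_def
    by (intro borel_measurable_sum borel_measurable_comp_Z borel_measurable_var_proj borel_measurable_ydev
        borel_measurable_tau_proj borel_measurable_tau_deg_incr_Z; simp)+
  define fs where "fs = [\<lambda>\<omega>. S1 \<omega> / (real n - 1),
    \<lambda>\<omega>. sigmaY2 P / (real n - 1) - (SU \<omega>)\<^sup>2 / (real n * (real n - 1)),
    \<lambda>\<omega>. - (D \<omega> / real (n choose 2)), \<lambda>\<omega>. - (S5 \<omega> / (real n / 2))]"
  have "sigmahat2 n q (\<lambda>i \<omega> j. fst (Z i \<omega>) j) (\<lambda>i \<omega>. snd (Z i \<omega>)) \<omega> - sigma2 P q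
      = (\<Sum>f\<leftarrow>fs. f \<omega>)" for \<omega>
    unfolding sigmahat2_deviation_decomp[OF n] by (simp add: fs_def S1_def SU_def S5_def D_def algebra_simps)
  then have "measure M {\<omega>\<in>space M. e < \<bar>sigmahat2 n q (\<lambda>i \<omega> j. fst (Z i \<omega>) j) (\<lambda>i \<omega>. snd (Z i \<omega>)) \<omega> - sigma2 P q\<bar>}
      = measure M {\<omega>\<in>space M. real (length fs) * c < \<bar>\<Sum>f\<leftarrow>fs. f \<omega>\<bar>}"
    by (simp add: fs_def c_def)
  also have "\<dots> \<le> (\<Sum>f\<leftarrow>fs. measure M {\<omega>\<in>space M. c \<le> \<bar>f \<omega>\<bar>})"
    by (rule measure_abs_sum_list_gt_le) (auto simp: fs_def)
  also have "\<dots> \<le> 16 * (real n * mu4 P / (real n - 1)\<^sup>2) / e\<^sup>2 + 8 * (sigmaY2 P / (real n - 1)) / e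
      + 16 * ((\<Sum>j<q. \<Sum>k<q. (covW P j k)\<^sup>2) / real (n choose 2)) / e\<^sup>2
      + 64 * ((\<Sum>j<q. \<Sum>k<q. beta P j * beta P k * covW P j k) / real n) / e\<^sup>2"
  proof -
    have "measure M {\<omega>\<in>space M. c \<le> \<bar>S1 \<omega> / (real n - 1)\<bar>}
        \<le> 16 * (real n * mu4 P / (real n - 1)\<^sup>2) / e\<^sup>2"
      using measure_var_proj_sum_ge_le[OF n c] by (simp add: S1_def c_def power_divide mult_ac)
    moreover have "measure M {\<omega>\<in>space M.
        c \<le> \<bar>sigmaY2 P / (real n - 1) - (SU \<omega>)\<^sup>2 / (real n * (real n - 1))\<bar>}
        \<le> 8 * (sigmaY2 P / (real n - 1)) / e"
      using measure_variance_correction_ge_le[OF n c] by (simp add: SU_def c_def mult_ac)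
    moreover have "measure M {\<omega>\<in>space M. c \<le> \<bar>- (D \<omega> / real (n choose 2))\<bar>}
        \<le> 16 * ((\<Sum>j<q. \<Sum>k<q. (covW P j k)\<^sup>2) / real (n choose 2)) / e\<^sup>2"
      using measure_tau_deg_ge_le[OF n c] by (simp add: D_def c_def power_divide mult_ac)
    moreover have "measure M {\<omega>\<in>space M. c \<le> \<bar>- (S5 \<omega> / (real n / 2))\<bar>}
        \<le> 64 * ((\<Sum>j<q. \<Sum>k<q. beta P j * beta P k * covW P j k) / real n) / e\<^sup>2"
      using measure_tau_proj_sum_ge_le[OF n c] by (simp add: S5_def c_def power_divide mult_ac)
    ultimately show ?thesis
      by (simp add: fs_def)
  qed
  finally show ?thesis
    by (simp add: add_divide_distrib)
qed

lemma sigmahat2_deviation_prob_le: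
  assumes n: "n \<ge> 2" and e: "e > 0"
  shows "measure M {\<omega>\<in>space M. e < \<bar>sigmahat2 n q (\<lambda>i \<omega> j. fst (Z i \<omega>) j) (\<lambda>i \<omega>. snd (Z i \<omega>)) \<omega> - sigma2 P q\<bar>}
    \<le> deviation_bound e n (mu4 P) (tau2 P q) (frobA2 P q / (real n)\<^sup>2)"
proof -
  define F where "F = frobA2 P q"
  have n1: "real n - 1 > 0" and n0: "real n > 0"
    using n by simp_all
  have "(\<Sum>j<q. \<Sum>k<q. (covW P j k)\<^sup>2) / real (n choose 2)
      \<le> (2 * F + 2 * (tau2 P q)\<^sup>2) / (real n * (real n - 1) / 2)"
    using sum_covW_sq_le[where Q=P and q=q] n1 n0 by (simp add: F_def real_choose_two divide_right_mono)
  also have "\<dots> = 4 * (F / (real n)\<^sup>2 * (real n / (real n - 1))) + 4 * ((tau2 P q)\<^sup>2 * (1 / (real n * (real n - 1))))"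
  proof -
    have "(2 * F + 2 * T) / (x * y / 2) = 4 * (F / x\<^sup>2 * (x / y)) + 4 * (T * (1 / (x * y)))"
      if "x \<noteq> 0" "y \<noteq> 0" for x y T :: real
      using that by (simp add: field_simps power2_eq_square)
    then show ?thesis
      using n1 n0 by simp
  qed
  finally have covW_term: "(\<Sum>j<q. \<Sum>k<q. (covW P j k)\<^sup>2) / real (n choose 2)
      \<le> 4 * (F / (real n)\<^sup>2 * (real n / (real n - 1))) + 4 * ((tau2 P q)\<^sup>2 * (1 / (real n * (real n - 1))))" .
  have "(\<Sum>j<q. \<Sum>k<q. beta P j * beta P k * covW P j k) / real n \<le> tau2 P q * sqrt F / real n"
    using beta_covW_beta_le[where Q=P and q=q] n0 by (simp add: F_def divide_right_mono)
  also have "\<dots> = tau2 P q * sqrt (F / (real n)\<^sup>2)"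
    using n0 by (simp add: real_sqrt_divide)
  finally have quad_term: "(\<Sum>j<q. \<Sum>k<q. beta P j * beta P k * covW P j k) / real n
      \<le> tau2 P q * sqrt (F / (real n)\<^sup>2)" .
  have "8 * sigmaY2 P / (real n - 1) \<le> 4 * (1 + mu4 P) / (real n - 1)"
    using sigmaY2_le_mu4 n1 by (intro divide_right_mono) auto
  then have "8 * (sigmaY2 P / (real n - 1)) / e \<le> 4 * ((1 + mu4 P) * (1 / (real n - 1))) / e"
    using e by (intro divide_right_mono) auto
  moreover have "(16 * (real n * mu4 P / (real n - 1)\<^sup>2) + 16 * ((\<Sum>j<q. \<Sum>k<q. (covW P j k)\<^sup>2) / real (n choose 2))
        + 64 * ((\<Sum>j<q. \<Sum>k<q. beta P j * beta P k * covW P j k) / real n)) / e\<^sup>2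
      \<le> (16 * (mu4 P * (real n / (real n - 1)\<^sup>2)) + 64 * (F / (real n)\<^sup>2 * (real n / (real n - 1)))
        + 64 * ((tau2 P q)\<^sup>2 * (1 / (real n * (real n - 1)))) + 64 * (tau2 P q * sqrt (F / (real n)\<^sup>2))) / e\<^sup>2"
  proof (rule divide_right_mono)
    have "real n * mu4 P / (real n - 1)\<^sup>2 = mu4 P * (real n / (real n - 1)\<^sup>2)"
      by simp
    then show "16 * (real n * mu4 P / (real n - 1)\<^sup>2) + 16 * ((\<Sum>j<q. \<Sum>k<q. (covW P j k)\<^sup>2) / real (n choose 2))
        + 64 * ((\<Sum>j<q. \<Sum>k<q. beta P j * beta P k * covW P j k) / real n)
      \<le> 16 * (mu4 P * (real n / (real n - 1)\<^sup>2)) + 64 * (F / (real n)\<^sup>2 * (real n / (real n - 1)))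
        + 64 * ((tau2 P q)\<^sup>2 * (1 / (real n * (real n - 1)))) + 64 * (tau2 P q * sqrt (F / (real n)\<^sup>2))"
      using covW_term quad_term by linarith
  qed simp
  ultimately show ?thesis
    using sigmahat2_deviation_prob_le_moments[OF n e] unfolding deviation_bound_def F_def by linarith
qed

end

theorem corollary1:
  fixes M :: "nat \<Rightarrow> 'a measure"
    and P :: "nat \<Rightarrow> ((nat \<Rightarrow> real) \<times> real) measure"
    and p :: "nat \<Rightarrow> nat"
    and X :: "nat \<Rightarrow> nat \<Rightarrow> 'a \<Rightarrow> nat \<Rightarrow> real"
    and Y :: "nat \<Rightarrow> nat \<Rightarrow> 'a \<Rightarrow> real"
  assumes M_prob: "\<And>n. prob_space (M n)"
    and P_prob: "\<And>n. prob_space (P n)"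
    and P_sets: "\<And>n. sets (P n) = sets (obsS (p n))"
    and obs_meas: "\<And>n i. i < n \<Longrightarrow>
        (\<lambda>\<omega>. (restrict (X n i \<omega>) {..<p n}, Y n i \<omega>)) \<in> measurable (M n) (obsS (p n))"
    and obs_indep: "\<And>n. prob_space.indep_vars (M n) (\<lambda>_. obsS (p n))
        (\<lambda>i \<omega>. (restrict (X n i \<omega>) {..<p n}, Y n i \<omega>)) {..<n}"
    and obs_dist: "\<And>n i. i < n \<Longrightarrow>
        distr (M n) (obsS (p n)) (\<lambda>\<omega>. (restrict (X n i \<omega>) {..<p n}, Y n i \<omega>)) = P n"
    and Y2_int: "\<And>n. integrable (P n) (\<lambda>z. (snd z)\<^sup>2)"
    and X2_int: "\<And>n. integrable (P n) (\<lambda>z. \<Sum>j<p n. (fst z j)\<^sup>2)"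
    and X_mean: "\<And>n j. j < p n \<Longrightarrow> (LINT z|P n. fst z j) = 0"
    and X_var: "\<And>n j k. j < p n \<Longrightarrow> k < p n \<Longrightarrow>
        (LINT z|P n. fst z j * fst z k) = (if j = k then 1 else 0)"
    and A_int: "\<And>n j k. j < p n \<Longrightarrow> k < p n \<Longrightarrow>
        integrable (P n) (\<lambda>z. fst z j * fst z k * (snd z)\<^sup>2)"
    and mu4_int: "\<And>n. integrable (P n) (\<lambda>z. (snd z - alpha (P n)) ^ 4)"
    and mu4_bdd: "\<exists>C. \<forall>n. mu4 (P n) \<le> C"
    and tau2_bdd: "\<exists>C. \<forall>n. tau2 (P n) (p n) \<le> C"
    and frob: "(\<lambda>n. frobA2 (P n) (p n) / (real n)\<^sup>2) \<longlonglongrightarrow> 0"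
  shows "\<forall>e>0. (\<lambda>n. measure (M n)
            {\<omega> \<in> space (M n). \<bar>sigmahat2 n (p n) (X n) (Y n) \<omega> - sigma2 (P n) (p n)\<bar> > e})
          \<longlonglongrightarrow> 0"
proof (intro allI impI)
  fix e :: real
  assume e: "e > 0"
  define Z where "Z n i \<omega> = (restrict (X n i \<omega>) {..<p n}, Y n i \<omega>)" for n i \<omega>
  let ?bound = "\<lambda>n. deviation_bound e n (mu4 (P n)) (tau2 (P n) (p n)) (frobA2 (P n) (p n) / (real n)\<^sup>2)"
  have bound: "measure (M n) {\<omega> \<in> space (M n). \<bar>sigmahat2 n (p n) (X n) (Y n) \<omega> - sigma2 (P n) (p n)\<bar> > e}
      \<le> ?bound n" if n: "n \<ge> 2" for n
  proof -
    interpret regression_sample "M n" "P n" "p n" n "Z n"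
      by (intro regression_sample.intro iid_sample.intro iid_sample_axioms.intro regression_population.intro
          regression_population_axioms.intro M_prob P_prob P_sets)
        (simp_all add: Z_def[abs_def] obs_meas obs_indep obs_dist Y2_int A_int mu4_int)
    have "sigmahat2 n (p n) (X n) (Y n) = sigmahat2 n (p n) (\<lambda>i \<omega> j. fst (Z n i \<omega>) j) (\<lambda>i \<omega>. snd (Z n i \<omega>))"
      by (simp add: fun_eq_iff sigmahat2_def tauhat2_def sigmaYhat2_def Ybar_def Z_def)
    then show ?thesis
      using sigmahat2_deviation_prob_le[OF n e] by simp
  qed
  have "Bseq (\<lambda>n. mu4 (P n))" "Bseq (\<lambda>n. tau2 (P n) (p n))"
    using Bseq_of_nonneg_bounded[of "\<lambda>n. mu4 (P n)", OF mu4_nonneg mu4_bdd]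
      Bseq_of_nonneg_bounded[of "\<lambda>n. tau2 (P n) (p n)", OF tau2_nonneg tau2_bdd] .
  then have lim: "?bound \<longlonglongrightarrow> 0"
    using frob by (rule deviation_bound_LIMSEQ_zero)
  show "(\<lambda>n. measure (M n)
      {\<omega> \<in> space (M n). \<bar>sigmahat2 n (p n) (X n) (Y n) \<omega> - sigma2 (P n) (p n)\<bar> > e}) \<longlonglongrightarrow> 0"
  proof (rule tendsto_sandwich[OF _ _ tendsto_const lim])
    show "eventually (\<lambda>n. measure (M n)
        {\<omega> \<in> space (M n). \<bar>sigmahat2 n (p n) (X n) (Y n) \<omega> - sigma2 (P n) (p n)\<bar> > e} \<le> ?bound n) sequentially"
      using bound by (intro eventually_sequentiallyI[of 2])
  qed simp
qed

end
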